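(* Let $m=2$. For generic $c\in\mathbb{C}^n$, \[\mathrm{rank}_p(\mathrm{Horn}(\mathcal{B},c))=\sum_{1\le i<j\le n}\mathrm{rank}_p(\mathrm{Horn}(\mathcal{B}[i,j],c[i,j])).\]
   Context: $\mathcal{B}=(b_{ji})\in\mathbb{Z}^{n\times 2}$ ($n>2$) has rank 2 with rows $b_1,\dots,b_n$ summing to zero; $c\in\mathbb{C}^n$. For any integer matrix $\mathcal{B}'$ with rows $b'_j\in\mathbb{Z}^2$ and vector $c'$, the Horn system is $\mathrm{Horn}(\mathcal{B}',c')=D_2\langle H_1,H_2\rangle$, $H_i=Q_i-y_iP_i$, $P_i=\prod_{j:b'_{ji}<0}\prod_{l=0}^{|b'_{ji}|-1}(b'_j\cdot\theta_y+c'_j-l)$, $Q_i=\prod_{j:b'_{ji}>0}\prod_{l=0}^{b'_{ji}-1}(b'_j\cdot\theta_y+c'_j-l)$, where $b'_j\cdot\theta_y=b'_{j1}y_1\partial_{y_1}+b'_{j2}y_2\partial_{y_2}$. $\mathcal{B}[i,j]$ is the $2\times2$ submatrix with rows $b_i,b_j$, and $c[i,j]=(c_i,c_j)$. $\mathrm{rank}_p(J)$ is the dimension of the space of Puiseux polynomial solutions (finite linear combinations of monomials with complex exponents) of a $D$-ideal $J$. Generic: outside an exceptional measure-zero set. *)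

theory Defs
  imports "HOL-Analysis.Analysis" "HOL-Library.Function_Algebras"
begin

text \<open>A Puiseux polynomial in y1,y2 is a finite C-linear combination of monomials
 y^a (a in C^2).  It is represented by its coefficient function
 f :: complex^2 => complex with finite support (distinct monomials with complex
 exponents are linearly independent, so this representation is faithful).
 The Euler operator b.theta_y + c acts on y^a by multiplication with b.a + c.\<close>

definition lin_form :: "int^2 \<Rightarrow> complex \<Rightarrow> complex^2 \<Rightarrow> complex" where
  "lin_form b c a = of_int (b$1) * a$1 + of_int (b$2) * a$2 + c"

definition horn_Q :: "'n set \<Rightarrow> ('n \<Rightarrow> int^2) \<Rightarrow> ('n \<Rightarrow> complex) \<Rightarrow> 2 \<Rightarrow> complex^2 \<Rightarrow> complex" where
  "horn_Q I b c i a =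
     (\<Prod>j\<in>{j\<in>I. b j $ i > 0}. \<Prod>l<nat (b j $ i). lin_form (b j) (c j) a - of_nat l)"

definition horn_P :: "'n set \<Rightarrow> ('n \<Rightarrow> int^2) \<Rightarrow> ('n \<Rightarrow> complex) \<Rightarrow> 2 \<Rightarrow> complex^2 \<Rightarrow> complex" where
  "horn_P I b c i a =
     (\<Prod>j\<in>{j\<in>I. b j $ i < 0}. \<Prod>l<nat (- (b j $ i)). lin_form (b j) (c j) a - of_nat l)"

text \<open>Puiseux polynomial solutions of Horn = D_2<H_1,H_2>, H_i = Q_i - y_i P_i:
 the common kernel of the generators.  Coefficientwise, H_i f = 0 reads
 Q_i(a) f(a) - P_i(a - e_i) f(a - e_i) = 0 for every exponent a.\<close>

definition horn_puiseux_sols :: "'n set \<Rightarrow> ('n \<Rightarrow> int^2) \<Rightarrow> ('n \<Rightarrow> complex) \<Rightarrow> (complex^2 \<Rightarrow> complex) set" where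
  "horn_puiseux_sols I b c =
     {f. finite {a. f a \<noteq> 0} \<and>
         (\<forall>i a. horn_Q I b c i a * f a = horn_P I b c i (a - axis i 1) * f (a - axis i 1))}"

definition horn_rank_p :: "'n set \<Rightarrow> ('n \<Rightarrow> int^2) \<Rightarrow> ('n \<Rightarrow> complex) \<Rightarrow> nat" where
  "horn_rank_p I b c =
     vector_space.dim (\<lambda>(s::complex) (f::complex^2 \<Rightarrow> complex) x. s * f x) (horn_puiseux_sols I b c)"

end

theory Submission
  imports Defs "HOL-Analysis.Gamma_Function"
begin

(* At an exponent a in the support of a Puiseux solution of a Horn system, walking from a in the
  directions -e_k and +e_k must leave the (finite) support, and the recurrence H_k then forces a
  zero of Q_k resp. P_k: some row r with b_rk > 0 and some row with b_rk < 0 have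
  L_r(a) = b_r.a + c_r in N.  For generic c at most two rows, and no two dependent rows, are
  integral at a common point, so the support of a solution lies in the disjoint union of the loci
  A_ij where L_i and L_j are integral, and its restriction to each A_ij is again a solution.
  On A_ij the weight prod_(r <> i,j) 1/Gamma(L_r + 1) does not vanish and solves the recurrences of
  the other rows, so multiplication by it identifies Horn(B[i,j], c[i,j]) with the solutions of
  Horn(B, c) supported on A_ij.  Finally a solution of a pair system is supported in a box whose
  size depends only on B, so all dimensions are finite and add up. *)

interpretation fun_space: vector_space "\<lambda>(s::'b::field) (f::'a \<Rightarrow> 'b) x. s * f x"
  by unfold_locales (auto simp: algebra_simps fun_eq_iff)

lemma sum_fun_apply: "(\<Sum>p\<in>P. F p) x = (\<Sum>p\<in>P. F p x)"
  by (induction P rule: infinite_finite_induct) auto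

lemma fun_space_dim_image_eq:
  fixes f :: "('a \<Rightarrow> 'b::field) \<Rightarrow> ('c \<Rightarrow> 'b)"
  assumes hom: "module_hom (\<lambda>s g x. s * g x) (\<lambda>s g x. s * g x) f"
    and inj: "inj_on f (fun_space.span S)"
  shows "fun_space.dim (f ` S) = fun_space.dim S"
proof -
  obtain B where B: "B \<subseteq> S" "fun_space.independent B" "S \<subseteq> fun_space.span B"
    "card B = fun_space.dim S"
    by (rule fun_space.basis_exists)
  have span_B: "fun_space.span B = fun_space.span S"
    unfolding fun_space.span_eq using B(1,3) fun_space.span_superset[of S] by blast
  have "fun_space.span (f ` B) = fun_space.span (f ` S)"
    by (simp add: module_hom.span_image[OF hom] span_B)
  moreover have inj_B: "inj_on f (fun_space.span B)"
    using inj span_B by simp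
  then have "fun_space.independent (f ` B)"
    by (rule module_hom.independent_injective_image[OF hom B(2)])
  moreover have "card (f ` B) = card B"
    using card_image inj_on_subset[OF inj_B fun_space.span_superset] by blast
  ultimately show ?thesis
    using B(4) fun_space.dim_eq_card[of "f ` B" "f ` S"] by simp
qed

lemma mult_fun_module_hom:
  "module_hom (\<lambda>s f x. s * f x) (\<lambda>s f x. s * f x) (\<lambda>h a. (g a :: 'b::field) * h a)"
  by (auto simp: module_hom_iff fun_space.module_axioms fun_eq_iff algebra_simps)

definition restrict0 :: "'a set \<Rightarrow> ('a \<Rightarrow> 'b::zero) \<Rightarrow> 'a \<Rightarrow> 'b" where
  "restrict0 A f a = (if a \<in> A then f a else 0)"

lemma restrict0_module_hom:
  "module_hom (\<lambda>s g x. s * g x) (\<lambda>s g x. s * g x) (restrict0 A :: ('a \<Rightarrow> 'b::field) \<Rightarrow> _)"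
  by (auto simp: module_hom_iff fun_space.module_axioms restrict0_def fun_eq_iff)

lemma fun_space_independent_finite_support:
  fixes B :: "('a \<Rightarrow> 'b::field) set"
  assumes fin: "finite (\<Union>f\<in>B. {a. f a \<noteq> 0})" and ind: "fun_space.independent B"
  shows "finite B"
proof -
  define F where "F = (\<Union>f\<in>B. {a. f a \<noteq> 0})"
  define \<delta> :: "'a \<Rightarrow> 'a \<Rightarrow> 'b" where "\<delta> a x = (if x = a then 1 else 0)" for a x
  have "f \<in> fun_space.span (\<delta> ` F)" if "f \<in> B" for f
  proof -
    have "(\<Sum>a\<in>F. f a * \<delta> a x) = f x" for x
    proof -
      have "(\<Sum>a\<in>F. f a * \<delta> a x) = (\<Sum>a\<in>F. if a = x then f x else 0)"
        by (rule sum.cong) (auto simp: \<delta>_def)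
      also have "\<dots> = f x"
        using that fin by (auto simp: F_def)
      finally show ?thesis .
    qed
    then have "f = (\<Sum>a\<in>F. (\<lambda>x. f a * \<delta> a x))"
      by (simp add: fun_eq_iff sum_fun_apply)
    also have "\<dots> \<in> fun_space.span (\<delta> ` F)"
      by (intro fun_space.span_sum fun_space.span_scale[of _ _ "f _", simplified] fun_space.span_base)
        auto
    finally show ?thesis .
  qed
  then show ?thesis
    using fun_space.independent_span_bound[OF _ ind] fin unfolding F_def by blast
qed

lemma restrict0_disjoint_family:
  assumes "disjoint_family_on A P" "p \<in> P" "q \<in> P" "{a. v a \<noteq> 0} \<subseteq> A q"
  shows "restrict0 (A p) v = (if q = p then v else 0)"
proof (cases "q = p")
  case False
  then have "A p \<inter> A q = {}"
    using assms(1-3) by (auto simp: disjoint_family_on_def)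
  with False assms(4) show ?thesis
    by (auto simp: restrict0_def fun_eq_iff)
qed (use assms(4) in \<open>auto simp: restrict0_def fun_eq_iff\<close>)

lemma sum_restrict0_disjoint_family:
  assumes "finite P" "disjoint_family_on A P" "{a. f a \<noteq> 0} \<subseteq> (\<Union>p\<in>P. A p)"
  shows "(\<Sum>p\<in>P. restrict0 (A p) f) = f"
proof
  fix a
  show "(\<Sum>p\<in>P. restrict0 (A p) f) a = f a"
  proof (cases "f a = 0")
    case False
    then obtain p where p: "p \<in> P" "a \<in> A p"
      using assms(3) by blast
    then have "(\<Sum>q\<in>P. restrict0 (A q) f a) = (\<Sum>q\<in>P. if q = p then f a else 0)"
      using assms(2) by (intro sum.cong) (auto simp: restrict0_def disjoint_family_on_def)
    with p assms(1) show ?thesis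
      by (simp add: sum_fun_apply)
  qed (simp add: sum_fun_apply restrict0_def sum.neutral)
qed

lemma fun_space_independent_UN_disjoint_supports:
  fixes Bs :: "'p \<Rightarrow> ('a \<Rightarrow> 'b::field) set"
  assumes disj: "disjoint_family_on A P" and ind: "\<And>p. p \<in> P \<Longrightarrow> fun_space.independent (Bs p)"
    and supp: "\<And>p v. p \<in> P \<Longrightarrow> v \<in> Bs p \<Longrightarrow> {a. v a \<noteq> 0} \<subseteq> A p"
  shows "fun_space.independent (\<Union>p\<in>P. Bs p)"
  unfolding fun_space.dependent_def
proof
  let ?BB = "\<Union>p\<in>P. Bs p"
  assume "\<exists>v\<in>?BB. v \<in> fun_space.span (?BB - {v})"
  then obtain p v where p: "p \<in> P" "v \<in> Bs p" and v: "v \<in> fun_space.span (?BB - {v})"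
    by blast
  have image: "restrict0 (A p) ` (?BB - {v}) \<subseteq> insert 0 (Bs p - {v})"
  proof
    fix u assume "u \<in> restrict0 (A p) ` (?BB - {v})"
    then obtain q w where qw: "q \<in> P" "w \<in> Bs q" "w \<noteq> v" "u = restrict0 (A p) w"
      by blast
    then show "u \<in> insert 0 (Bs p - {v})"
      using restrict0_disjoint_family[OF disj p(1) qw(1) supp[OF qw(1,2)]] by (cases "q = p") auto
  qed
  have "fun_space.span (restrict0 (A p) ` (?BB - {v})) \<subseteq> fun_space.span (Bs p - {v})"
    using fun_space.span_mono[OF image] by simp
  moreover have "v = restrict0 (A p) v"
    using restrict0_disjoint_family[OF disj p(1) p(1) supp[OF p]] by simp
  then have "v \<in> fun_space.span (restrict0 (A p) ` (?BB - {v}))"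
    using v by (simp add: module_hom.span_image[OF restrict0_module_hom])
  ultimately show False
    using ind[OF p(1)] p(2) unfolding fun_space.dependent_def by blast
qed

lemma fun_space_dim_eq_sum_dim_disjoint_supports:
  fixes V :: "('a \<Rightarrow> 'b::field) set" and A :: "'p \<Rightarrow> 'a set"
  defines "W p \<equiv> {f \<in> V. {a. f a \<noteq> 0} \<subseteq> A p}"
  assumes P: "finite P" and disj: "disjoint_family_on A P"
    and cover: "\<And>f. f \<in> V \<Longrightarrow> {a. f a \<noteq> 0} \<subseteq> (\<Union>p\<in>P. A p)"
    and restrict: "\<And>f p. f \<in> V \<Longrightarrow> p \<in> P \<Longrightarrow> restrict0 (A p) f \<in> V"
    and fin: "\<And>p. p \<in> P \<Longrightarrow> finite (\<Union>f\<in>W p. {a. f a \<noteq> 0})"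
  shows "fun_space.dim V = (\<Sum>p\<in>P. fun_space.dim (W p))"
proof -
  have "\<exists>B. B \<subseteq> W p \<and> fun_space.independent B \<and> W p \<subseteq> fun_space.span B \<and>
      card B = fun_space.dim (W p)" for p
    by (rule fun_space.basis_exists[of "W p"]) blast
  then obtain Bs where Bs: "\<And>p. Bs p \<subseteq> W p" "\<And>p. fun_space.independent (Bs p)"
    "\<And>p. W p \<subseteq> fun_space.span (Bs p)" "\<And>p. card (Bs p) = fun_space.dim (W p)"
    by metis
  have supp: "{a. v a \<noteq> 0} \<subseteq> A p" if "v \<in> Bs p" for p v
    using that Bs(1) by (auto simp: W_def)
  have "(\<Union>p\<in>P. Bs p) \<subseteq> V"
    using Bs(1) by (auto simp: W_def)
  moreover have "V \<subseteq> fun_space.span (\<Union>p\<in>P. Bs p)"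
  proof
    fix f assume f: "f \<in> V"
    have "restrict0 (A p) f \<in> fun_space.span (\<Union>p\<in>P. Bs p)" if p: "p \<in> P" for p
    proof -
      have "restrict0 (A p) f \<in> W p"
        using restrict[OF f p] by (auto simp: W_def restrict0_def)
      then show ?thesis
        using Bs(3) fun_space.span_mono[of "Bs p" "\<Union>p\<in>P. Bs p"] p by blast
    qed
    then have "(\<Sum>p\<in>P. restrict0 (A p) f) \<in> fun_space.span (\<Union>p\<in>P. Bs p)"
      by (rule fun_space.span_sum)
    then show "f \<in> fun_space.span (\<Union>p\<in>P. Bs p)"
      by (simp only: sum_restrict0_disjoint_family[OF P disj cover[OF f]])
  qed
  moreover have "fun_space.independent (\<Union>p\<in>P. Bs p)"
    using fun_space_independent_UN_disjoint_supports[OF disj] Bs(2) supp by blast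
  ultimately have "fun_space.dim V = card (\<Union>p\<in>P. Bs p)"
    by (rule fun_space.basis_card_eq_dim[symmetric])
  also have "\<dots> = (\<Sum>p\<in>P. card (Bs p))"
  proof (rule card_UN_disjoint[OF P])
    show "\<forall>p\<in>P. finite (Bs p)"
    proof
      fix p assume p: "p \<in> P"
      have "(\<Union>f\<in>Bs p. {a. f a \<noteq> 0}) \<subseteq> (\<Union>f\<in>W p. {a. f a \<noteq> 0})"
        using Bs(1) by blast
      then show "finite (Bs p)"
        using fun_space_independent_finite_support[OF _ Bs(2)] fin[OF p] finite_subset by blast
    qed
    show "\<forall>p\<in>P. \<forall>q\<in>P. p \<noteq> q \<longrightarrow> Bs p \<inter> Bs q = {}"
    proof (intro ballI impI)
      fix p q assume pq: "p \<in> P" "q \<in> P" "p \<noteq> q"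
      have "v = 0" if "v \<in> Bs p" "v \<in> Bs q" for v
        using supp[OF that(1)] supp[OF that(2)] disjoint_family_onD[OF disj pq] by (auto simp: fun_eq_iff)
      then show "Bs p \<inter> Bs q = {}"
        using fun_space.dependent_zero Bs(2)[of p] by blast
    qed
  qed
  finally show ?thesis
    by (simp add: Bs(4))
qed

lemma lin_form_diff_axis: "lin_form b c (a - axis k t) = lin_form b c a - of_int (b $ k) * t"
  using exhaust_2[of k] by (auto simp: lin_form_def axis_def algebra_simps)

lemma lin_form_add_axis: "lin_form b c (a + axis k t) = lin_form b c a + of_int (b $ k) * t"
  using exhaust_2[of k] by (auto simp: lin_form_def axis_def algebra_simps)

lemma lin_form_uminus: "lin_form (- b) c (- a) = lin_form b c a"
  by (simp add: lin_form_def)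

lemma horn_sols_subspace: "fun_space.subspace (horn_puiseux_sols I b c)"
proof (unfold fun_space.subspace_def, intro conjI ballI allI)
  fix f g assume f: "f \<in> horn_puiseux_sols I b c" and g: "g \<in> horn_puiseux_sols I b c"
  have "{a. (f + g) a \<noteq> 0} \<subseteq> {a. f a \<noteq> 0} \<union> {a. g a \<noteq> 0}"
    by auto
  with f g show "f + g \<in> horn_puiseux_sols I b c"
    by (auto simp: horn_puiseux_sols_def algebra_simps intro: finite_subset)
next
  fix s :: complex and f assume f: "f \<in> horn_puiseux_sols I b c"
  have "{a. s * f a \<noteq> 0} \<subseteq> {a. f a \<noteq> 0}"
    by auto
  with f show "(\<lambda>a. s * f a) \<in> horn_puiseux_sols I b c"
    by (auto simp: horn_puiseux_sols_def algebra_simps intro: finite_subset)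
qed (simp add: horn_puiseux_sols_def)

lemma horn_sols_recurrence:
  "f \<in> horn_puiseux_sols I b c \<Longrightarrow>
   horn_Q I b c k a * f a = horn_P I b c k (a - axis k 1) * f (a - axis k 1)"
  by (simp add: horn_puiseux_sols_def)

lemma horn_sols_restrict0:
  assumes "f \<in> horn_puiseux_sols I b c" and "\<And>a k. a - axis k 1 \<in> A \<longleftrightarrow> a \<in> A"
  shows "restrict0 A f \<in> horn_puiseux_sols I b c"
proof -
  have "{a. restrict0 A f a \<noteq> 0} \<subseteq> {a. f a \<noteq> 0}"
    by (auto simp: restrict0_def)
  with assms show ?thesis
    by (auto simp: horn_puiseux_sols_def restrict0_def intro: finite_subset)
qed

lemma horn_Q_uminus: "horn_Q I (\<lambda>r. - b r) c k a = horn_P I b c k (- a)"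
  and horn_P_uminus: "horn_P I (\<lambda>r. - b r) c k a = horn_Q I b c k (- a)"
  unfolding horn_Q_def horn_P_def using lin_form_uminus[of _ _ "- a"] by simp_all

lemma horn_sols_reflect:
  assumes f: "f \<in> horn_puiseux_sols I b c"
  shows "(\<lambda>a. f (- a)) \<in> horn_puiseux_sols I (\<lambda>r. - b r) c"
proof -
  have "{a. f (- a) \<noteq> 0} = uminus ` {a. f a \<noteq> 0}"
    by (force simp: image_iff)
  then have "finite {a. f (- a) \<noteq> 0}"
    using f by (simp add: horn_puiseux_sols_def)
  moreover have "horn_P I b c k (- a) * f (- a) =
      horn_Q I b c k (- (a - axis k 1)) * f (- (a - axis k 1))" for k a
    using horn_sols_recurrence[OF f, of k "- a + axis k 1"] by simp
  ultimately show ?thesis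
    by (simp add: horn_puiseux_sols_def horn_Q_uminus horn_P_uminus)
qed

lemma horn_sols_boundary_pos_row:
  assumes h: "h \<in> horn_puiseux_sols I b c" and I: "finite I"
    and "h a \<noteq> 0" "h (a - axis k 1) = 0"
  shows "\<exists>r\<in>I. 0 < b r $ k \<and> (\<exists>l<nat (b r $ k). lin_form (b r) (c r) a = of_nat l)"
proof -
  have "horn_Q I b c k a = 0"
    using horn_sols_recurrence[OF h, of k a] assms(3,4) by simp
  then show ?thesis
    using I by (auto simp: horn_Q_def prod_zero_iff)
qed

lemma horn_sols_boundary_neg_row:
  assumes h: "h \<in> horn_puiseux_sols I b c" and I: "finite I"
    and "h a \<noteq> 0" "h (a + axis k 1) = 0"
  shows "\<exists>r\<in>I. b r $ k < 0 \<and> (\<exists>l<nat (- b r $ k). lin_form (b r) (c r) a = of_nat l)"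
proof -
  have "horn_P I b c k a = 0"
    using horn_sols_recurrence[OF h, of k "a + axis k 1"] assms(3,4) by simp
  then show ?thesis
    using I by (auto simp: horn_P_def prod_zero_iff)
qed

lemma horn_sols_support_pos_row:
  assumes f: "f \<in> horn_puiseux_sols I b c" and I: "finite I" and fa: "f a \<noteq> 0"
  shows "\<exists>r\<in>I. 0 < b r $ k \<and> lin_form (b r) (c r) a \<in> \<nat>"
proof -
  define p where "p t = a - axis k (of_nat t :: complex)" for t :: nat
  have "inj p"
    by (auto simp: inj_on_def p_def axis_eq_axis)
  then have "finite {t. f (p t) \<noteq> 0}"
    using f finite_vimageI[of "{a. f a \<noteq> 0}" p] by (simp add: horn_puiseux_sols_def vimage_def)
  then obtain n where "f (p n) = 0"
    using ex_new_if_finite[OF infinite_UNIV_nat] by blast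
  moreover have "p 0 = a"
    by (simp add: p_def vec_eq_iff axis_def)
  ultimately obtain s where s: "f (p s) \<noteq> 0" "f (p (Suc s)) = 0"
    using ex_least_nat_less[of "\<lambda>t. f (p t) = 0" n] fa by auto
  have "p s - axis k 1 = p (Suc s)"
    by (simp add: p_def vec_eq_iff axis_def)
  then have "f (p s - axis k 1) = 0"
    using s(2) by simp
  then obtain r l where r: "r \<in> I" "0 < b r $ k" "lin_form (b r) (c r) (p s) = of_nat l"
    using horn_sols_boundary_pos_row[OF f I s(1)] by blast
  then have "lin_form (b r) (c r) a = of_nat (l + nat (b r $ k) * s)"
    by (simp add: p_def lin_form_diff_axis algebra_simps)
  with r show ?thesis
    by (metis of_nat_in_Nats)
qed

lemma horn_sols_support_neg_row:
  assumes f: "f \<in> horn_puiseux_sols I b c" and I: "finite I" and fa: "f a \<noteq> 0"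
  shows "\<exists>r\<in>I. b r $ k < 0 \<and> lin_form (b r) (c r) a \<in> \<nat>"
  using horn_sols_support_pos_row[OF horn_sols_reflect[OF f] I, of "- a" k] fa
  by (simp add: lin_form_uminus)

lemma horn_sols_pair_support:
  assumes h: "h \<in> horn_puiseux_sols {i, j} b c" and ha: "h a \<noteq> 0"
  shows "lin_form (b i) (c i) a \<in> \<nat>" "lin_form (b j) (c j) a \<in> \<nat>" "b i $ k * b j $ k < 0"
proof -
  obtain r where r: "r \<in> {i, j}" "0 < b r $ k" "lin_form (b r) (c r) a \<in> \<nat>"
    using horn_sols_support_pos_row[OF h _ ha] by blast
  obtain r' where r': "r' \<in> {i, j}" "b r' $ k < 0" "lin_form (b r') (c r') a \<in> \<nat>"
    using horn_sols_support_neg_row[OF h _ ha] by blast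
  have "{r, r'} = {i, j}"
    using r r' by auto
  then show "lin_form (b i) (c i) a \<in> \<nat>" "lin_form (b j) (c j) a \<in> \<nat>" "b i $ k * b j $ k < 0"
    using r r' by (auto simp: doubleton_eq_iff mult_less_0_iff)
qed

definition integral_locus :: "('n \<Rightarrow> int^2) \<Rightarrow> ('n \<Rightarrow> complex) \<Rightarrow> 'n set \<Rightarrow> (complex^2) set" where
  "integral_locus b c R = {a. \<forall>r\<in>R. lin_form (b r) (c r) a \<in> \<int>}"

lemma integral_locus_diff_axis:
  "a - axis k 1 \<in> integral_locus b c R \<longleftrightarrow> a \<in> integral_locus b c R"
proof -
  have "lin_form (b r) (c r) (a - axis k 1) \<in> \<int> \<longleftrightarrow> lin_form (b r) (c r) a \<in> \<int>" for r
    by (simp add: lin_form_diff_axis)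
  then show ?thesis
    by (simp add: integral_locus_def)
qed

lemma horn_sols_pair_support_locus:
  "h \<in> horn_puiseux_sols {i, j} b c \<Longrightarrow> {a. h a \<noteq> 0} \<subseteq> integral_locus b c {i, j}"
  using horn_sols_pair_support Nats_subset_Ints by (fastforce simp: integral_locus_def)

lemma horn_sols_full_support:
  fixes b :: "'n::{finite,linorder} \<Rightarrow> int^2"
  assumes f: "f \<in> horn_puiseux_sols UNIV b c" and fa: "f a \<noteq> 0"
  shows "\<exists>i j. i < j \<and> a \<in> integral_locus b c {i, j}"
proof -
  obtain r where r: "0 < b r $ 1" "lin_form (b r) (c r) a \<in> \<nat>"
    using horn_sols_support_pos_row[OF f finite fa] by blast
  obtain r' where r': "b r' $ 1 < 0" "lin_form (b r') (c r') a \<in> \<nat>"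
    using horn_sols_support_neg_row[OF f finite fa] by blast
  have "r \<noteq> r'"
    using r r' by auto
  with r r' show ?thesis
    using Nats_subset_Ints
    by (intro exI[of _ "min r r'"] exI[of _ "max r r'"])
      (auto simp: integral_locus_def min_def max_def)
qed

(* Explicit form of "generic c": it fails only on the hyperplanes Im (w . c) = 0, w <> 0 integral. *)
definition generic_params :: "('n::finite \<Rightarrow> int^2) \<Rightarrow> ('n \<Rightarrow> complex) \<Rightarrow> bool" where
  "generic_params b c \<longleftrightarrow>
     (\<forall>w. w \<noteq> 0 \<and> (\<Sum>r\<in>UNIV. w r *s b r) = 0 \<longrightarrow> (\<Sum>r\<in>UNIV. of_int (w r) * c r) \<notin> \<int>)"

lemma generic_params_integral_rows_independent:
  fixes b :: "'n::finite \<Rightarrow> int^2"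
  assumes g: "generic_params b c" and rel: "(\<Sum>r\<in>S. w r *s b r) = 0"
    and a: "a \<in> integral_locus b c S"
  shows "\<forall>r\<in>S. w r = 0"
proof (rule ccontr)
  define w' where "w' r = (if r \<in> S then w r else 0)" for r
  assume "\<not> (\<forall>r\<in>S. w r = 0)"
  then have "w' \<noteq> 0"
    by (auto simp: w'_def fun_eq_iff)
  moreover have "(\<Sum>r\<in>UNIV. w' r *s b r) = 0"
    using rel by (simp add: w'_def if_distrib[of "\<lambda>x. x *s _"] sum.If_cases)
  moreover have "(\<Sum>r\<in>UNIV. of_int (w' r) * c r) \<in> \<int>"
  proof -
    have "(\<Sum>r\<in>S. of_int (w r) * lin_form (b r) (c r) a) =
        (\<Sum>r\<in>S. of_int (w r) * c r) + a $ 1 * of_int ((\<Sum>r\<in>S. w r *s b r) $ 1)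
          + a $ 2 * of_int ((\<Sum>r\<in>S. w r *s b r) $ 2)"
      by (simp add: lin_form_def sum.distrib sum_distrib_left algebra_simps)
    also have "\<dots> = (\<Sum>r\<in>UNIV. of_int (w' r) * c r)"
      using rel by (simp add: w'_def if_distrib[of "\<lambda>x. of_int x * _"] sum.If_cases)
    finally have "(\<Sum>r\<in>S. of_int (w r) * lin_form (b r) (c r) a) = (\<Sum>r\<in>UNIV. of_int (w' r) * c r)" .
    moreover have "(\<Sum>r\<in>S. of_int (w r) * lin_form (b r) (c r) a) \<in> \<int>"
      using a by (intro Ints_sum Ints_mult) (auto simp: integral_locus_def)
    ultimately show ?thesis
      by simp
  qed
  ultimately show False
    using g by (auto simp: generic_params_def)
qed

lemma int2_pair_relation:
  fixes u v :: "int^2"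
  assumes "u $ 1 * v $ 2 - u $ 2 * v $ 1 = 0"
  shows "\<exists>p q. (p \<noteq> 0 \<or> q \<noteq> 0) \<and> p *s u + q *s v = 0"
proof -
  consider "u $ 1 \<noteq> 0" | "u $ 2 \<noteq> 0" | "u = 0"
    by (auto simp: vec_eq_iff forall_2)
  then show ?thesis
  proof cases
    case 1
    with assms show ?thesis
      by (intro exI[of _ "- v $ 1"] exI[of _ "u $ 1"]) (auto simp: vec_eq_iff forall_2 algebra_simps)
  next
    case 2
    with assms show ?thesis
      by (intro exI[of _ "- v $ 2"] exI[of _ "u $ 2"]) (auto simp: vec_eq_iff forall_2 algebra_simps)
  qed (intro exI[of _ 1] exI[of _ 0]; simp)
qed

lemma int2_triple_relation:
  fixes u v w :: "int^2"
  shows "\<exists>p q r. (p \<noteq> 0 \<or> q \<noteq> 0 \<or> r \<noteq> 0) \<and> p *s u + q *s v + r *s w = 0"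
proof (cases "v $ 1 * w $ 2 - v $ 2 * w $ 1 = 0")
  case True
  then show ?thesis
    using int2_pair_relation[of v w] by (metis add.left_neutral vector_smult_lzero)
next
  case False
  then show ?thesis
    by (intro exI[of _ "v $ 1 * w $ 2 - v $ 2 * w $ 1"] exI[of _ "- (u $ 1 * w $ 2 - u $ 2 * w $ 1)"]
        exI[of _ "u $ 1 * v $ 2 - u $ 2 * v $ 1"]) (auto simp: vec_eq_iff forall_2 algebra_simps)
qed

lemma generic_params_pair_det:
  fixes b :: "'n::finite \<Rightarrow> int^2"
  assumes g: "generic_params b c" and ij: "i \<noteq> j" and a: "a \<in> integral_locus b c {i, j}"
  shows "b i $ 1 * b j $ 2 - b i $ 2 * b j $ 1 \<noteq> 0"
proof
  assume "b i $ 1 * b j $ 2 - b i $ 2 * b j $ 1 = 0"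
  then obtain p q where pq: "p \<noteq> 0 \<or> q \<noteq> 0" "p *s b i + q *s b j = 0"
    by (blast dest: int2_pair_relation)
  define w where "w r = (if r = i then p else q)" for r
  have "(\<Sum>r\<in>{i, j}. w r *s b r) = 0"
    using ij pq(2) by (simp add: w_def)
  then have "\<forall>r\<in>{i, j}. w r = 0"
    by (rule generic_params_integral_rows_independent[OF g _ a])
  then show False
    using pq(1) ij by (simp add: w_def)
qed

lemma generic_params_three_rows:
  fixes b :: "'n::finite \<Rightarrow> int^2"
  assumes g: "generic_params b c" and ijk: "i \<noteq> j" "i \<noteq> k" "j \<noteq> k"
  shows "a \<notin> integral_locus b c {i, j, k}"
proof
  assume a: "a \<in> integral_locus b c {i, j, k}"
  obtain p q r where pqr: "p \<noteq> 0 \<or> q \<noteq> 0 \<or> r \<noteq> 0" "p *s b i + q *s b j + r *s b k = 0"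
    using int2_triple_relation[of "b i" "b j" "b k"] by blast
  define w where "w m = (if m = i then p else if m = j then q else r)" for m
  have "(\<Sum>m\<in>{i, j, k}. w m *s b m) = 0"
    using ijk pqr(2) by (simp add: w_def add.assoc)
  then have "\<forall>m\<in>{i, j, k}. w m = 0"
    by (rule generic_params_integral_rows_independent[OF g _ a])
  then show False
    using pqr(1) ijk by (simp add: w_def)
qed

lemma integral_locus_pairs_disjoint:
  fixes b :: "'n::{finite,linorder} \<Rightarrow> int^2"
  assumes g: "generic_params b c"
  shows "disjoint_family_on (\<lambda>(i, j). integral_locus b c {i, j}) {(i, j). i < j}"
  unfolding disjoint_family_on_def
proof (intro ballI impI)
  fix p q :: "'n \<times> 'n"
  assume "p \<in> {(i, j). i < j}" "q \<in> {(i, j). i < j}" "p \<noteq> q"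
  then obtain i j i' j' where pq: "p = (i, j)" "q = (i', j')" "i < j" "i' < j'" "(i, j) \<noteq> (i', j')"
    by auto
  have "\<not> {i', j'} \<subseteq> {i, j}"
  proof
    assume "{i', j'} \<subseteq> {i, j}"
    with pq(3,4) have "i' = i \<and> j' = j"
      by auto
    with pq(5) show False
      by simp
  qed
  then obtain r where r: "r \<in> {i', j'}" "r \<notin> {i, j}"
    by blast
  have "a \<notin> integral_locus b c {i, j, r}" for a
    using generic_params_three_rows[OF g, of i j r] pq(3) r(2) by auto
  with r(1) show "(\<lambda>(i, j). integral_locus b c {i, j}) p \<inter> (\<lambda>(i, j). integral_locus b c {i, j}) q = {}"
    by (auto simp: pq integral_locus_def)
qed

lemma generic_params_almost_everywhere:
  fixes B :: "int^2^'n::finite"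
  shows "\<exists>E::(complex^'n) set. E \<in> null_sets lborel \<and>
           (\<forall>c. c \<notin> E \<longrightarrow> generic_params (\<lambda>j. B $ j) (\<lambda>j. c $ j))"
proof -
  define v where "v w = (\<chi> k. of_int (w k) * \<i>)" for w :: "'n \<Rightarrow> int"
  define H where "H w = {c::complex^'n. v w \<bullet> c = 0}" for w
  have inner_v: "v w \<bullet> c = (\<Sum>k\<in>UNIV. of_int (w k) * Im (c $ k))" for w c
    by (simp add: v_def inner_vec_def inner_complex_def)
  have null_H: "H w \<in> null_sets lborel" if "w \<noteq> 0" for w
  proof -
    from that obtain k where "w k \<noteq> 0"
      by (auto simp: fun_eq_iff)
    then have "v w \<noteq> 0"
      by (auto simp: v_def vec_eq_iff)
    then have "negligible (H w)"
      unfolding H_def by (intro negligible_hyperplane) simp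
    moreover have "H w \<in> sets lborel"
      unfolding H_def by (simp add: borel_closed closed_hyperplane)
    ultimately show ?thesis
      using negligible_iff_null_sets null_sets_completion_iff by blast
  qed
  define E where "E = (\<Union>w\<in>{w. w \<noteq> 0}. H w)"
  have "E \<in> null_sets lborel"
    unfolding E_def by (rule null_sets_UN') (auto intro: null_H)
  moreover have "generic_params (\<lambda>j. B $ j) (\<lambda>j. c $ j)" if "c \<notin> E" for c
    unfolding generic_params_def
  proof (intro allI impI notI)
    fix w :: "'n \<Rightarrow> int"
    assume "w \<noteq> 0 \<and> (\<Sum>r\<in>UNIV. w r *s B $ r) = 0" and "(\<Sum>r\<in>UNIV. of_int (w r) * c $ r) \<in> \<int>"
    then have "w \<noteq> 0" and "Im (\<Sum>r\<in>UNIV. of_int (w r) * c $ r) = 0"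
      by (auto simp: complex_is_Int_iff)
    then have "c \<in> H w"
      by (simp add: H_def inner_v Im_sum)
    with \<open>w \<noteq> 0\<close> that show False
      by (auto simp: E_def)
  qed
  ultimately show ?thesis
    by blast
qed

lemma prod_diff_mult_rGamma:
  "(\<Prod>l<n. z - of_nat l) * rGamma (z + 1) = rGamma (z + 1 - of_nat n)"
proof (induction n)
  case (Suc n)
  have "(\<Prod>l<Suc n. z - of_nat l) * rGamma (z + 1) = (z - of_nat n) * rGamma (z - of_nat n + 1)"
    using Suc.IH by (simp add: algebra_simps)
  also have "\<dots> = rGamma (z + 1 - of_nat (Suc n))"
    by (simp add: rGamma_plus1)
  finally show ?case .
qed simp

lemma horn_Q_union:
  "finite I \<Longrightarrow> finite J \<Longrightarrow> I \<inter> J = {} \<Longrightarrow>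
   horn_Q (I \<union> J) b c k a = horn_Q I b c k a * horn_Q J b c k a"
  unfolding horn_Q_def by (subst prod.union_disjoint[symmetric]) (auto intro: prod.cong)

lemma horn_P_union:
  "finite I \<Longrightarrow> finite J \<Longrightarrow> I \<inter> J = {} \<Longrightarrow>
   horn_P (I \<union> J) b c k a = horn_P I b c k a * horn_P J b c k a"
  unfolding horn_P_def by (subst prod.union_disjoint[symmetric]) (auto intro: prod.cong)

lemma horn_Q_singleton:
  "horn_Q {r} b c k a = (if 0 < b r $ k then \<Prod>l<nat (b r $ k). lin_form (b r) (c r) a - of_nat l else 1)"
proof -
  have "{j \<in> {r}. 0 < b j $ k} = (if 0 < b r $ k then {r} else {})"
    by auto
  then show ?thesis
    by (simp add: horn_Q_def)
qed

lemma horn_P_singleton: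
  "horn_P {r} b c k a = (if b r $ k < 0 then \<Prod>l<nat (- b r $ k). lin_form (b r) (c r) a - of_nat l else 1)"
proof -
  have "{j \<in> {r}. b j $ k < 0} = (if b r $ k < 0 then {r} else {})"
    by auto
  then show ?thesis
    by (simp add: horn_P_def)
qed

lemma horn_recurrence_rGamma_row:
  "horn_Q {r} b c k a * rGamma (lin_form (b r) (c r) a + 1) =
   horn_P {r} b c k (a - axis k 1) * rGamma (lin_form (b r) (c r) (a - axis k 1) + 1)"
proof -
  define z where "z = lin_form (b r) (c r) a"
  have shift: "lin_form (b r) (c r) (a - axis k 1) = z - of_int (b r $ k)"
    by (simp add: z_def lin_form_diff_axis)
  consider "0 < b r $ k" | "b r $ k < 0" | "b r $ k = 0"
    by linarith
  then show ?thesis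
  proof cases
    case 1
    then show ?thesis
      using prod_diff_mult_rGamma[where n = "nat (b r $ k)" and z = z]
      by (simp add: horn_Q_singleton horn_P_singleton shift z_def[symmetric] diff_add_eq)
  next
    case 2
    then show ?thesis
      using prod_diff_mult_rGamma[where n = "nat (- b r $ k)" and z = "z - of_int (b r $ k)"]
      by (simp add: horn_Q_singleton horn_P_singleton shift z_def[symmetric] diff_add_eq)
  qed (simp add: horn_Q_singleton horn_P_singleton shift z_def)
qed

definition gamma_weight :: "'n set \<Rightarrow> ('n \<Rightarrow> int^2) \<Rightarrow> ('n \<Rightarrow> complex) \<Rightarrow> complex^2 \<Rightarrow> complex" where
  "gamma_weight K b c a = (\<Prod>r\<in>K. rGamma (lin_form (b r) (c r) a + 1))"

lemma horn_recurrence_gamma_weight: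
  assumes "finite K"
  shows "horn_Q K b c k a * gamma_weight K b c a =
         horn_P K b c k (a - axis k 1) * gamma_weight K b c (a - axis k 1)"
  using assms
proof (induction K rule: finite_induct)
  case (insert r K)
  let ?a' = "a - axis k 1" and ?\<Gamma> = "\<lambda>a. rGamma (lin_form (b r) (c r) a + 1)"
  have "horn_Q (insert r K) b c k a * gamma_weight (insert r K) b c a =
      (horn_Q {r} b c k a * ?\<Gamma> a) * (horn_Q K b c k a * gamma_weight K b c a)"
    using horn_Q_union[of "{r}" K] insert.hyps by (simp add: gamma_weight_def mult_ac)
  also have "\<dots> = (horn_P {r} b c k ?a' * ?\<Gamma> ?a') * (horn_P K b c k ?a' * gamma_weight K b c ?a')"
    by (simp only: insert.IH horn_recurrence_rGamma_row)
  also have "\<dots> = horn_P (insert r K) b c k ?a' * gamma_weight (insert r K) b c ?a'"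
    using horn_P_union[of "{r}" K] insert.hyps by (simp add: gamma_weight_def mult_ac)
  finally show ?case .
qed (simp add: horn_Q_def horn_P_def gamma_weight_def)

lemma gamma_weight_nonzero:
  assumes "finite K" "\<And>r. r \<in> K \<Longrightarrow> lin_form (b r) (c r) a \<notin> \<int>"
  shows "gamma_weight K b c a \<noteq> 0"
proof -
  have "rGamma (lin_form (b r) (c r) a + 1) \<noteq> 0" if "r \<in> K" for r
  proof
    assume "rGamma (lin_form (b r) (c r) a + 1) = 0"
    then have "lin_form (b r) (c r) a + 1 - 1 \<in> \<int>"
      by (intro Ints_diff) (auto simp: rGamma_eq_zero_iff nonpos_Ints_Int)
    with assms(2)[OF that] show False
      by simp
  qed
  with assms(1) show ?thesis
    by (simp add: gamma_weight_def)
qed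

lemma horn_Q_nonzero:
  assumes "finite K" "\<And>r. r \<in> K \<Longrightarrow> lin_form (b r) (c r) a \<notin> \<int>"
  shows "horn_Q K b c k a \<noteq> 0"
  using assms by (auto simp: horn_Q_def prod_zero_iff) (metis Ints_of_nat)

lemma horn_Q_diff_split:
  "finite I \<Longrightarrow> J \<subseteq> I \<Longrightarrow> horn_Q I b c k a = horn_Q J b c k a * horn_Q (I - J) b c k a"
  using horn_Q_union[of J "I - J"] finite_subset[of J I] by (simp add: Un_absorb1)

lemma horn_P_diff_split:
  "finite I \<Longrightarrow> J \<subseteq> I \<Longrightarrow> horn_P I b c k a = horn_P J b c k a * horn_P (I - J) b c k a"
  using horn_P_union[of J "I - J"] finite_subset[of J I] by (simp add: Un_absorb1)

lemma horn_sols_mult_gamma_weight: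
  assumes I: "finite I" and J: "J \<subseteq> I" and h: "h \<in> horn_puiseux_sols J b c"
  shows "(\<lambda>a. gamma_weight (I - J) b c a * h a) \<in> horn_puiseux_sols I b c"
proof -
  let ?g = "gamma_weight (I - J) b c"
  have "horn_Q I b c k a * (?g a * h a) =
      horn_P I b c k (a - axis k 1) * (?g (a - axis k 1) * h (a - axis k 1))" for k a
  proof -
    have "horn_Q I b c k a * (?g a * h a) = (horn_Q J b c k a * h a) * (horn_Q (I - J) b c k a * ?g a)"
      by (simp add: horn_Q_diff_split[OF I J] mult_ac)
    also have "\<dots> = (horn_P J b c k (a - axis k 1) * h (a - axis k 1)) *
        (horn_P (I - J) b c k (a - axis k 1) * ?g (a - axis k 1))"
      using I by (simp add: horn_sols_recurrence[OF h] horn_recurrence_gamma_weight)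
    also have "\<dots> = horn_P I b c k (a - axis k 1) * (?g (a - axis k 1) * h (a - axis k 1))"
      by (simp add: horn_P_diff_split[OF I J] mult_ac)
    finally show ?thesis .
  qed
  moreover have "{a. ?g a * h a \<noteq> 0} \<subseteq> {a. h a \<noteq> 0}"
    by auto
  ultimately show ?thesis
    using h by (auto simp: horn_puiseux_sols_def intro: finite_subset)
qed

lemma horn_sols_div_gamma_weight:
  assumes I: "finite I" and J: "J \<subseteq> I" and f: "f \<in> horn_puiseux_sols I b c"
    and supp: "{a. f a \<noteq> 0} \<subseteq> integral_locus b c J"
    and nonint: "\<And>a r. a \<in> integral_locus b c J \<Longrightarrow> r \<in> I - J \<Longrightarrow> lin_form (b r) (c r) a \<notin> \<int>"
  shows "(\<lambda>a. f a / gamma_weight (I - J) b c a) \<in> horn_puiseux_sols J b c"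
proof -
  let ?g = "gamma_weight (I - J) b c" and ?A = "integral_locus b c J"
  have "horn_Q J b c k a * (f a / ?g a) =
      horn_P J b c k (a - axis k 1) * (f (a - axis k 1) / ?g (a - axis k 1))" for k a
  proof (cases "a \<in> ?A")
    case True
    let ?w = "horn_Q (I - J) b c k a * ?g a"
    have "a - axis k 1 \<in> ?A"
      using True integral_locus_diff_axis by blast
    then have "?g a \<noteq> 0" "?g (a - axis k 1) \<noteq> 0"
      by (intro gamma_weight_nonzero; use I nonint True in auto)+
    moreover have "horn_Q (I - J) b c k a \<noteq> 0"
      by (rule horn_Q_nonzero) (use I nonint True in auto)
    ultimately have "?w \<noteq> 0"
      by simp
    have "horn_Q J b c k a * (f a / ?g a) * ?w = horn_Q I b c k a * f a"
      using \<open>?g a \<noteq> 0\<close> by (simp add: horn_Q_diff_split[OF I J] field_simps)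
    also have "\<dots> = horn_P I b c k (a - axis k 1) * f (a - axis k 1)"
      by (rule horn_sols_recurrence[OF f])
    also have "\<dots> = horn_P J b c k (a - axis k 1) * (f (a - axis k 1) / ?g (a - axis k 1)) *
        (horn_P (I - J) b c k (a - axis k 1) * ?g (a - axis k 1))"
      using \<open>?g (a - axis k 1) \<noteq> 0\<close> by (simp add: horn_P_diff_split[OF I J] field_simps)
    also have "\<dots> = horn_P J b c k (a - axis k 1) * (f (a - axis k 1) / ?g (a - axis k 1)) * ?w"
      by (simp only: horn_recurrence_gamma_weight[OF finite_Diff[OF I]])
    finally show ?thesis
      using mult_right_cancel[OF \<open>?w \<noteq> 0\<close>] by blast
  next
    case False
    then have "f a = 0" "f (a - axis k 1) = 0"
      using supp integral_locus_diff_axis[of a k b c J] by auto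
    then show ?thesis
      by simp
  qed
  moreover have "{a. f a / ?g a \<noteq> 0} \<subseteq> {a. f a \<noteq> 0}"
    by auto
  ultimately show ?thesis
    using f by (auto simp: horn_puiseux_sols_def intro: finite_subset)
qed

lemma generic_params_other_rows:
  fixes b :: "'n::finite \<Rightarrow> int^2"
  assumes "generic_params b c" "i \<noteq> j" "a \<in> integral_locus b c {i, j}" "r \<notin> {i, j}"
  shows "lin_form (b r) (c r) a \<notin> \<int>"
  using generic_params_three_rows[OF assms(1,2), of r a] assms(3,4) by (auto simp: integral_locus_def)

lemma generic_params_gamma_weight_nonzero:
  fixes b :: "'n::finite \<Rightarrow> int^2"
  assumes "generic_params b c" "i \<noteq> j" "a \<in> integral_locus b c {i, j}"
  shows "gamma_weight (UNIV - {i, j}) b c a \<noteq> 0"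
  using generic_params_other_rows[OF assms] by (intro gamma_weight_nonzero) auto

lemma horn_sols_pair_embedding_image:
  fixes b :: "'n::finite \<Rightarrow> int^2"
  assumes g: "generic_params b c" and ij: "i \<noteq> j"
  shows "(\<lambda>h a. gamma_weight (UNIV - {i, j}) b c a * h a) ` horn_puiseux_sols {i, j} b c =
           {f \<in> horn_puiseux_sols UNIV b c. {a. f a \<noteq> 0} \<subseteq> integral_locus b c {i, j}}"
    (is "?T ` _ = _")
proof (intro equalityI subsetI)
  fix f assume "f \<in> ?T ` horn_puiseux_sols {i, j} b c"
  then obtain h where h: "h \<in> horn_puiseux_sols {i, j} b c" "f = ?T h"
    by blast
  then show "f \<in> {f \<in> horn_puiseux_sols UNIV b c. {a. f a \<noteq> 0} \<subseteq> integral_locus b c {i, j}}"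
    using horn_sols_mult_gamma_weight[OF finite subset_UNIV h(1)] horn_sols_pair_support_locus[OF h(1)]
    by auto
next
  let ?g = "gamma_weight (UNIV - {i, j}) b c"
  fix f assume "f \<in> {f \<in> horn_puiseux_sols UNIV b c. {a. f a \<noteq> 0} \<subseteq> integral_locus b c {i, j}}"
  then have f: "f \<in> horn_puiseux_sols UNIV b c" and supp: "{a. f a \<noteq> 0} \<subseteq> integral_locus b c {i, j}"
    by auto
  have quotient: "(\<lambda>a. f a / ?g a) \<in> horn_puiseux_sols {i, j} b c"
    using horn_sols_div_gamma_weight[OF finite subset_UNIV f supp] generic_params_other_rows[OF g ij]
    by blast
  have "f = ?T (\<lambda>a. f a / ?g a)"
    using supp generic_params_gamma_weight_nonzero[OF g ij] by (force simp: fun_eq_iff)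
  then show "f \<in> ?T ` horn_puiseux_sols {i, j} b c"
    by (rule image_eqI[OF _ quotient])
qed

lemma horn_sols_pair_embedding_inj:
  fixes b :: "'n::finite \<Rightarrow> int^2"
  assumes g: "generic_params b c" and ij: "i \<noteq> j"
  shows "inj_on (\<lambda>h a. gamma_weight (UNIV - {i, j}) b c a * h a) (horn_puiseux_sols {i, j} b c)"
proof (rule inj_onI)
  fix h h' assume h: "h \<in> horn_puiseux_sols {i, j} b c" and h': "h' \<in> horn_puiseux_sols {i, j} b c"
    and eq: "(\<lambda>a. gamma_weight (UNIV - {i, j}) b c a * h a) = (\<lambda>a. gamma_weight (UNIV - {i, j}) b c a * h' a)"
  have "h a = h' a" for a
  proof (cases "a \<in> integral_locus b c {i, j}")
    case True
    then show ?thesis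
      using fun_cong[OF eq, of a] generic_params_gamma_weight_nonzero[OF g ij] by simp
  next
    case False
    then have "h a = 0" "h' a = 0"
      using horn_sols_pair_support_locus[OF h] horn_sols_pair_support_locus[OF h'] by blast+
    then show ?thesis
      by simp
  qed
  then show "h = h'"
    by blast
qed

(* Here d = |v| u + |u| v (1-norms) has d_1 = -sgn u2 * det and d_2 = sgn u1 * det; for u = b i,
  v = b j it is the slope of the functional maximised in horn_sols_pair_maximiser_bound, and the rows
  r with d_k b_rk < 0 for k = 1 and k = 2 differ. *)
lemma opposite_signs_combination:
  fixes u1 u2 v1 v2 :: int
  assumes "u1 * v1 < 0" "u2 * v2 < 0" "u1 * v2 - u2 * v1 \<noteq> 0"
  defines "d1 \<equiv> (\<bar>v1\<bar> + \<bar>v2\<bar>) * u1 + (\<bar>u1\<bar> + \<bar>u2\<bar>) * v1"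
    and "d2 \<equiv> (\<bar>v1\<bar> + \<bar>v2\<bar>) * u2 + (\<bar>u1\<bar> + \<bar>u2\<bar>) * v2"
  shows "d1 \<noteq> 0" "d2 \<noteq> 0" "\<not> (d1 * u1 < 0 \<and> d2 * u2 < 0)" "\<not> (d1 * v1 < 0 \<and> d2 * v2 < 0)"
proof -
  define D where "D = u1 * v2 - u2 * v1"
  have "d1 = - sgn u2 * D \<and> d2 = sgn u1 * D"
    using assms(1,2)
    by (cases "0 < u1"; cases "0 < u2") (auto simp: d1_def d2_def D_def mult_less_0_iff algebra_simps)
  moreover have "sgn v1 = - sgn u1" "sgn v2 = - sgn u2" "u1 \<noteq> 0" "u2 \<noteq> 0" "D \<noteq> 0"
    using assms(1-3) by (auto simp: D_def sgn_if mult_less_0_iff)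
  ultimately show "d1 \<noteq> 0" "d2 \<noteq> 0" "\<not> (d1 * u1 < 0 \<and> d2 * u2 < 0)" "\<not> (d1 * v1 < 0 \<and> d2 * v2 < 0)"
    by (auto simp: sgn_if mult_less_0_iff zero_less_mult_iff split: if_splits)
qed

lemma horn_sols_support_maximum_row:
  fixes \<phi> :: "complex^2 \<Rightarrow> real"
  assumes h: "h \<in> horn_puiseux_sols I b c" and I: "finite I"
    and slope: "\<And>x. \<phi> (x + axis k 1) = \<phi> x + of_int d" and "d \<noteq> 0"
    and hm: "h m \<noteq> 0" and max: "\<And>x. h x \<noteq> 0 \<Longrightarrow> \<phi> x \<le> \<phi> m"
  shows "\<exists>r\<in>I. d * b r $ k < 0 \<and> (\<exists>l<nat \<bar>b r $ k\<bar>. lin_form (b r) (c r) m = of_nat l)"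
proof (cases "0 < d")
  case True
  have "h (m + axis k 1) = 0"
    using max[of "m + axis k 1"] slope[of m] True by auto
  then obtain r l where "r \<in> I" "b r $ k < 0" "l < nat (- b r $ k)" "lin_form (b r) (c r) m = of_nat l"
    using horn_sols_boundary_neg_row[OF h I hm] by blast
  with True show ?thesis
    by (intro bexI[of _ r]) (auto simp: mult_pos_neg)
next
  case False
  then have "d < 0"
    using \<open>d \<noteq> 0\<close> by simp
  have "\<phi> (m - axis k 1) = \<phi> m - of_int d"
    using slope[of "m - axis k 1"] by simp
  then have "h (m - axis k 1) = 0"
    using max[of "m - axis k 1"] \<open>d < 0\<close> by auto
  then obtain r l where "r \<in> I" "0 < b r $ k" "l < nat (b r $ k)" "lin_form (b r) (c r) m = of_nat l"
    using horn_sols_boundary_pos_row[OF h I hm] by blast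
  with \<open>d < 0\<close> show ?thesis
    by (intro bexI[of _ r]) (auto simp: mult_neg_pos)
qed

lemma int_weighted_sum_le_bound:
  fixes \<alpha> \<beta> :: int and x y m n :: nat
  assumes \<alpha>: "1 \<le> \<alpha>" and \<beta>: "1 \<le> \<beta>" and le: "\<alpha> * x + \<beta> * y \<le> \<alpha> * m + \<beta> * n"
    and "m < \<alpha> + \<beta>" "n < \<alpha> + \<beta>"
  shows "x < (\<alpha> + \<beta>) * (\<alpha> + \<beta>)" "y < (\<alpha> + \<beta>) * (\<alpha> + \<beta>)"
proof -
  have "\<alpha> * m + \<beta> * n \<le> \<alpha> * (\<alpha> + \<beta> - 1) + \<beta> * (\<alpha> + \<beta> - 1)"
    using assms by (intro add_mono mult_left_mono) auto
  also have "\<dots> = (\<alpha> + \<beta>) * (\<alpha> + \<beta>) - (\<alpha> + \<beta>)"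
    by (simp add: algebra_simps)
  finally have "\<alpha> * x + \<beta> * y \<le> (\<alpha> + \<beta>) * (\<alpha> + \<beta>) - (\<alpha> + \<beta>)"
    using le by linarith
  moreover have "int x \<le> \<alpha> * x" "int y \<le> \<beta> * y" "0 \<le> \<alpha> * x" "0 \<le> \<beta> * y"
    using \<alpha> \<beta> by (simp_all add: mult_le_cancel_right1)
  ultimately show "x < (\<alpha> + \<beta>) * (\<alpha> + \<beta>)" "y < (\<alpha> + \<beta>) * (\<alpha> + \<beta>)"
    using \<alpha> \<beta> by linarith+
qed

lemma horn_sols_pair_maximiser_bound:
  fixes b :: "'n \<Rightarrow> int^2" and c :: "'n \<Rightarrow> complex" and i j :: 'n and \<phi> :: "complex^2 \<Rightarrow> real"
  defines "\<alpha> \<equiv> \<bar>b j $ 1\<bar> + \<bar>b j $ 2\<bar>" and "\<beta> \<equiv> \<bar>b i $ 1\<bar> + \<bar>b i $ 2\<bar>"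
  defines "\<phi> x \<equiv> of_int \<alpha> * Re (lin_form (b i) (c i) x) + of_int \<beta> * Re (lin_form (b j) (c j) x)"
  assumes h: "h \<in> horn_puiseux_sols {i, j} b c" and det: "b i $ 1 * b j $ 2 - b i $ 2 * b j $ 1 \<noteq> 0"
    and hm: "h m \<noteq> 0" and max: "\<And>x. h x \<noteq> 0 \<Longrightarrow> \<phi> x \<le> \<phi> m"
  shows "\<exists>mi mj. int mi < \<alpha> + \<beta> \<and> int mj < \<alpha> + \<beta> \<and>
           lin_form (b i) (c i) m = of_nat mi \<and> lin_form (b j) (c j) m = of_nat mj"
proof -
  have opp: "b i $ k * b j $ k < 0" for k
    using horn_sols_pair_support(3)[OF h hm] .
  define d where "d k = \<alpha> * b i $ k + \<beta> * b j $ k" for k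
  note signs = opposite_signs_combination[OF opp[of 1] opp[of 2] det, folded \<alpha>_def \<beta>_def d_def]
  have slope: "\<phi> (x + axis k 1) = \<phi> x + of_int (d k)" for x k
    by (simp add: \<phi>_def d_def lin_form_add_axis algebra_simps)
  have "d k \<noteq> 0" for k
    using signs(1,2) exhaust_2[of k] by auto
  then have row: "\<exists>r\<in>{i, j}. d k * b r $ k < 0 \<and>
      (\<exists>l<nat \<bar>b r $ k\<bar>. lin_form (b r) (c r) m = of_nat l)" for k
    using horn_sols_support_maximum_row[OF h _ slope _ hm max] by simp
  obtain r1 l1 where r1: "r1 \<in> {i, j}" "d 1 * b r1 $ 1 < 0" "l1 < nat \<bar>b r1 $ 1\<bar>"
    "lin_form (b r1) (c r1) m = of_nat l1"
    using row[of 1] by blast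
  obtain r2 l2 where r2: "r2 \<in> {i, j}" "d 2 * b r2 $ 2 < 0" "l2 < nat \<bar>b r2 $ 2\<bar>"
    "lin_form (b r2) (c r2) m = of_nat l2"
    using row[of 2] by blast
  have "r1 \<noteq> r2"
    using signs(3,4) r1(1,2) r2(1,2) by auto
  moreover have small: "int l < \<alpha> + \<beta>" if "l < nat \<bar>b r $ k\<bar>" "r \<in> {i, j}" for l r k
    using that exhaust_2[of k] unfolding \<alpha>_def \<beta>_def by auto
  ultimately show ?thesis
    using r1 r2 small[OF r1(3) r1(1)] small[OF r2(3) r2(1)] by blast
qed

lemma horn_sols_pair_support_bound:
  assumes h: "h \<in> horn_puiseux_sols {i, j} b c" and det: "b i $ 1 * b j $ 2 - b i $ 2 * b j $ 1 \<noteq> 0"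
    and ha: "h a \<noteq> 0"
  defines "K \<equiv> \<bar>b i $ 1\<bar> + \<bar>b i $ 2\<bar> + \<bar>b j $ 1\<bar> + \<bar>b j $ 2\<bar>"
  shows "\<exists>x y. x < nat (K * K) \<and> y < nat (K * K) \<and>
           lin_form (b i) (c i) a = of_nat x \<and> lin_form (b j) (c j) a = of_nat y"
proof -
  define \<alpha> where "\<alpha> = \<bar>b j $ 1\<bar> + \<bar>b j $ 2\<bar>"
  define \<beta> where "\<beta> = \<bar>b i $ 1\<bar> + \<bar>b i $ 2\<bar>"
  define \<phi> where "\<phi> x = of_int \<alpha> * Re (lin_form (b i) (c i) x) + of_int \<beta> * Re (lin_form (b j) (c j) x)"
    for x
  define S where "S = {x. h x \<noteq> 0}"
  have "finite S" "a \<in> S"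
    using h ha by (auto simp: S_def horn_puiseux_sols_def)
  then have "Max (\<phi> ` S) \<in> \<phi> ` S"
    by (intro Max_in) auto
  then obtain m where m: "m \<in> S" "\<phi> m = Max (\<phi> ` S)"
    by auto
  then have max: "\<phi> x \<le> \<phi> m" if "h x \<noteq> 0" for x
    using that \<open>finite S\<close> by (simp add: S_def)
  obtain mi mj where mi: "int mi < \<alpha> + \<beta>" "lin_form (b i) (c i) m = of_nat mi"
    and mj: "int mj < \<alpha> + \<beta>" "lin_form (b j) (c j) m = of_nat mj"
    using horn_sols_pair_maximiser_bound[OF h det _ max[unfolded \<phi>_def \<alpha>_def \<beta>_def]] m(1)
    unfolding \<alpha>_def \<beta>_def S_def by blast
  obtain x y where x: "lin_form (b i) (c i) a = of_nat x" and y: "lin_form (b j) (c j) a = of_nat y"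
    using horn_sols_pair_support(1,2)[OF h ha] by (auto elim!: Nats_cases)
  have "real_of_int (\<alpha> * x + \<beta> * y) \<le> real_of_int (\<alpha> * mi + \<beta> * mj)"
    using max[OF ha] unfolding \<phi>_def x y mi(2) mj(2) by simp
  then have ineq: "\<alpha> * x + \<beta> * y \<le> \<alpha> * mi + \<beta> * mj"
    by (simp only: of_int_le_iff)
  have "1 \<le> \<alpha>" "1 \<le> \<beta>"
    using horn_sols_pair_support(3)[OF h ha, of 1] by (auto simp: \<alpha>_def \<beta>_def mult_less_0_iff)
  moreover have "K = \<alpha> + \<beta>"
    by (simp add: K_def \<alpha>_def \<beta>_def)
  ultimately have "int x < K * K" "int y < K * K"
    using int_weighted_sum_le_bound[OF _ _ ineq] mi(1) mj(1) by simp_all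
  with x y show ?thesis
    by (intro exI[of _ x] exI[of _ y]) auto
qed

lemma lin_form_pair_inj:
  assumes "u $ 1 * v $ 2 - u $ 2 * v $ 1 \<noteq> 0"
  shows "inj (\<lambda>a. (lin_form u \<gamma> a, lin_form v \<delta> a))"
proof (rule injI)
  fix a a' :: "complex^2"
  define e where "e k = a $ k - a' $ k" for k
  assume "(lin_form u \<gamma> a, lin_form v \<delta> a) = (lin_form u \<gamma> a', lin_form v \<delta> a')"
  then have eu: "of_int (u $ 1) * e 1 + of_int (u $ 2) * e 2 = 0"
    and ev: "of_int (v $ 1) * e 1 + of_int (v $ 2) * e 2 = 0"
    by (auto simp: e_def lin_form_def algebra_simps)
  define D :: complex where "D = of_int (u $ 1 * v $ 2 - u $ 2 * v $ 1)"
  have "D \<noteq> 0"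
    using assms by (simp only: D_def of_int_eq_0_iff not_False_eq_True)
  have "D * e 1 = of_int (v $ 2) * (of_int (u $ 1) * e 1 + of_int (u $ 2) * e 2)
      - of_int (u $ 2) * (of_int (v $ 1) * e 1 + of_int (v $ 2) * e 2)"
    by (simp add: D_def algebra_simps)
  also have "\<dots> = 0"
    by (simp only: eu ev) simp
  finally have "e 1 = 0"
    using \<open>D \<noteq> 0\<close> by simp
  have "D * e 2 = of_int (u $ 1) * (of_int (v $ 1) * e 1 + of_int (v $ 2) * e 2)
      - of_int (v $ 1) * (of_int (u $ 1) * e 1 + of_int (u $ 2) * e 2)"
    by (simp add: D_def algebra_simps)
  also have "\<dots> = 0"
    by (simp only: eu ev) simp
  finally have "e 2 = 0"
    using \<open>D \<noteq> 0\<close> by simp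
  with \<open>e 1 = 0\<close> have "a $ 1 = a' $ 1" "a $ 2 = a' $ 2"
    by (simp_all add: e_def)
  then show "a = a'"
    by (simp add: vec_eq_iff forall_2)
qed

lemma horn_sols_pair_finite_support:
  fixes b :: "'n::finite \<Rightarrow> int^2"
  assumes g: "generic_params b c" and ij: "i \<noteq> j"
  shows "finite (\<Union>h\<in>horn_puiseux_sols {i, j} b c. {a. h a \<noteq> 0})"
proof (cases "b i $ 1 * b j $ 2 - b i $ 2 * b j $ 1 = 0")
  case True
  have "h a = 0" if "h \<in> horn_puiseux_sols {i, j} b c" for h a
  proof (rule ccontr)
    assume "h a \<noteq> 0"
    then have "a \<in> integral_locus b c {i, j}"
      using horn_sols_pair_support_locus[OF that] by blast
    with True show False
      using generic_params_pair_det[OF g ij] by blast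
  qed
  then show ?thesis
    by simp
next
  case False
  define K where "K = \<bar>b i $ 1\<bar> + \<bar>b i $ 2\<bar> + \<bar>b j $ 1\<bar> + \<bar>b j $ 2\<bar>"
  define X where "X = (of_nat :: nat \<Rightarrow> complex) ` {..<nat (K * K)}"
  have "(\<Union>h\<in>horn_puiseux_sols {i, j} b c. {a. h a \<noteq> 0}) \<subseteq>
      (\<lambda>a. (lin_form (b i) (c i) a, lin_form (b j) (c j) a)) -` (X \<times> X)"
    using horn_sols_pair_support_bound[where i = i and j = j and b = b and c = c, OF _ False]
    by (fastforce simp: X_def K_def)
  moreover have "finite ((\<lambda>a. (lin_form (b i) (c i) a, lin_form (b j) (c j) a)) -` (X \<times> X))"
    by (intro finite_vimageI lin_form_pair_inj False) (simp add: X_def)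
  ultimately show ?thesis
    by (rule finite_subset)
qed

lemma horn_sols_on_pair_locus_dim:
  fixes b :: "'n::finite \<Rightarrow> int^2"
  assumes g: "generic_params b c" and ij: "i \<noteq> j"
  shows "fun_space.dim {f \<in> horn_puiseux_sols UNIV b c. {a. f a \<noteq> 0} \<subseteq> integral_locus b c {i, j}} =
         fun_space.dim (horn_puiseux_sols {i, j} b c)"
  unfolding horn_sols_pair_embedding_image[OF g ij, symmetric]
proof (rule fun_space_dim_image_eq[OF mult_fun_module_hom])
  have "fun_space.span (horn_puiseux_sols {i, j} b c) = horn_puiseux_sols {i, j} b c"
    by (simp add: horn_sols_subspace)
  then show "inj_on (\<lambda>h a. gamma_weight (UNIV - {i, j}) b c a * h a)
      (fun_space.span (horn_puiseux_sols {i, j} b c))"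
    using horn_sols_pair_embedding_inj[OF g ij] by (simp only:)
qed

lemma horn_sols_on_pair_locus_finite_support:
  fixes b :: "'n::finite \<Rightarrow> int^2"
  assumes g: "generic_params b c" and ij: "i \<noteq> j"
  shows "finite (\<Union>f\<in>{f \<in> horn_puiseux_sols UNIV b c. {a. f a \<noteq> 0} \<subseteq> integral_locus b c {i, j}}.
                   {a. f a \<noteq> 0})"
  unfolding horn_sols_pair_embedding_image[OF g ij, symmetric]
  by (rule finite_subset[OF _ horn_sols_pair_finite_support[OF g ij]]) auto

lemma horn_sols_dim_eq_sum_pairs:
  fixes b :: "'n::{finite,linorder} \<Rightarrow> int^2"
  assumes g: "generic_params b c"
  shows "fun_space.dim (horn_puiseux_sols UNIV b c) =
           (\<Sum>(i, j)\<in>{(i, j). i < j}. fun_space.dim (horn_puiseux_sols {i, j} b c))"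
proof -
  let ?V = "horn_puiseux_sols UNIV b c" and ?A = "\<lambda>(i, j). integral_locus b c {i, j}"
  have "fun_space.dim ?V = (\<Sum>p\<in>{(i, j). i < j}. fun_space.dim {f \<in> ?V. {a. f a \<noteq> 0} \<subseteq> ?A p})"
  proof (rule fun_space_dim_eq_sum_dim_disjoint_supports)
    show "disjoint_family_on ?A {(i, j). i < j}"
      by (rule integral_locus_pairs_disjoint[OF g])
    show "{a. f a \<noteq> 0} \<subseteq> (\<Union>p\<in>{(i, j). i < j}. ?A p)" if f: "f \<in> ?V" for f
    proof
      fix a assume "a \<in> {a. f a \<noteq> 0}"
      then obtain i j where "i < j" "a \<in> integral_locus b c {i, j}"
        using horn_sols_full_support[OF f] by blast
      then show "a \<in> (\<Union>p\<in>{(i, j). i < j}. ?A p)"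
        by (intro UN_I[of "(i, j)"]) auto
    qed
    show "restrict0 (?A p) f \<in> ?V" if "f \<in> ?V" for f p
      by (cases p) (simp add: horn_sols_restrict0[OF that integral_locus_diff_axis])
    show "finite (\<Union>f\<in>{f \<in> ?V. {a. f a \<noteq> 0} \<subseteq> ?A p}. {a. f a \<noteq> 0})" if "p \<in> {(i, j). i < j}" for p
      using that horn_sols_on_pair_locus_finite_support[OF g] by auto
  qed simp
  also have "\<dots> = (\<Sum>(i, j)\<in>{(i, j). i < j}. fun_space.dim (horn_puiseux_sols {i, j} b c))"
    using horn_sols_on_pair_locus_dim[OF g] by (intro sum.cong) auto
  finally show ?thesis .
qed

theorem lemma6p2:
  fixes B :: "int^2^('n::{finite,linorder})"
  assumes "CARD('n) > 2"
    and "rank (\<chi> j k. real_of_int (B $ j $ k)) = 2"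
    and "(\<Sum>j\<in>UNIV. B $ j) = 0"
  shows "\<exists>E :: (complex^('n::{finite,linorder})) set. E \<in> null_sets lborel \<and>
           (\<forall>c. c \<notin> E \<longrightarrow>
              horn_rank_p UNIV (\<lambda>j. B $ j) (\<lambda>j. c $ j) =
              (\<Sum>(i, j)\<in>{(i, j). i < j}. horn_rank_p {i, j} (\<lambda>j. B $ j) (\<lambda>j. c $ j)))"
proof -
  obtain E :: "(complex^('n::{finite,linorder})) set" where E: "E \<in> null_sets lborel"
    and generic: "\<And>c. c \<notin> E \<Longrightarrow> generic_params (\<lambda>j. B $ j) (\<lambda>j. c $ j)"
    using generic_params_almost_everywhere by blast
  have "horn_rank_p UNIV (\<lambda>j. B $ j) (\<lambda>j. c $ j) =
      (\<Sum>(i, j)\<in>{(i, j). i < j}. horn_rank_p {i, j} (\<lambda>j. B $ j) (\<lambda>j. c $ j))" if "c \<notin> E" for c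
    using horn_sols_dim_eq_sum_pairs[OF generic[OF that]] by (simp add: horn_rank_p_def)
  with E show ?thesis
    by blast
qed

end
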